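(* Let $v=\sum_{\alpha\in\{0,1\}^n}f_\alpha\omega_\alpha\in\mathcal P^\omega_n$ with $f_\alpha\in\mathcal P_n$. Then $v\in\Lambda^\omega_n$ if and only if for every $k=0,1,\dots,n$ the polynomial $F_k:=f_{\tau^{(k)}}$ satisfies (i) $F_k\in\mathcal P_n^{S_{n-k}\times S_k}$, and (ii) $f_\alpha=\partial_{\sigma_\alpha}(F_k)$ for every $\alpha\in(\mathbb Z_2^n)_k$.
   Context: Let $\mathcal P_n=\mathbb Q[x_1,\dots,x_n]$ and $\mathcal P^\omega_n=\mathcal P_n\otimes\bigwedge[\omega_1,\dots,\omega_n]$ ($\omega_i$ odd, commuting with the $x_j$). $S_n$ acts on $\mathcal P^\omega_n$ by ring automorphisms via $s_i(x_j)=x_{s_i(j)}$, $s_i(\omega_j)=\omega_j+\delta_{ij}(x_j-x_{j+1})\omega_{j+1}$; $\Lambda^\omega_n=(\mathcal P^\omega_n)^{S_n}$. $\partial_i=(1-s_i)/(x_i-x_{i+1})$ on $\mathcal P_n$, and $\partial_w=\partial_{i_1}\cdots\partial_{i_m}$ for a reduced expression $w=s_{i_1}\cdots s_{i_m}$. For $\alpha\in\{0,1\}^n$, $\omega_\alpha=\omega_1^{\alpha_1}\cdots\omega_n^{\alpha_n}$, $(\mathbb Z_2^n)_k=\{\alpha:\sum\alpha_i=k\}$, $\tau^{(k)}=(0,\dots,0,1,\dots,1)$ ($n-k$ zeros followed by $k$ ones). For $\alpha\in(\mathbb Z_2^n)_k$ with zeros at positions $v_1<\dots<v_{n-k}$ and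 ones at $u_1<\dots<u_k$, $\sigma_\alpha\in S_n$ is given by $\sigma_\alpha(i)=v_i$ ($i\le n-k$), $\sigma_\alpha(i)=u_{i-n+k}$ ($i>n-k$). $\mathcal P_n^{S_{n-k}\times S_k}$ denotes polynomials symmetric separately in $x_1,\dots,x_{n-k}$ and in $x_{n-k+1},\dots,x_n$. *)

theory Defs
  imports Complex_Main "HOL-Library.Poly_Mapping" "HOL-Combinatorics.Permutations"
begin

type_synonym mpoly = "(nat \<Rightarrow>\<^sub>0 nat) \<Rightarrow>\<^sub>0 rat"

definition Var :: "nat \<Rightarrow> mpoly" where
  "Var i = Poly_Mapping.single (Poly_Mapping.single i 1) 1"

definition Pn :: "nat \<Rightarrow> mpoly set" where
  "Pn n = {p. \<forall>m \<in> Poly_Mapping.keys p. Poly_Mapping.keys m \<subseteq> {1..n}}"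

text \<open>Action of a permutation w of the variable indices: w(x_j) = x_(w j).
  The monomial with exponents m goes to the one with exponents m o w^-1,
  so the coefficient of m in w(p) is the coefficient of m o w in p.\<close>
definition perm_poly :: "(nat \<Rightarrow> nat) \<Rightarrow> mpoly \<Rightarrow> mpoly" where
  "perm_poly w p =
     Abs_poly_mapping (\<lambda>m. Poly_Mapping.lookup p
        (Abs_poly_mapping (Poly_Mapping.lookup m \<circ> w)))"

definition s :: "nat \<Rightarrow> nat \<Rightarrow> nat" where
  "s i = Transposition.transpose i (Suc i)"

definition dd :: "nat \<Rightarrow> mpoly \<Rightarrow> mpoly" where
  "dd i f = (THE g. (Var i - Var (Suc i)) * g = f - perm_poly (s i) f)"

definition inv_count :: "nat \<Rightarrow> (nat \<Rightarrow> nat) \<Rightarrow> nat" where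
  "inv_count n w = card {(i, j). 1 \<le> i \<and> i < j \<and> j \<le> n \<and> w j < w i}"

definition reduced_word :: "nat \<Rightarrow> (nat \<Rightarrow> nat) \<Rightarrow> nat list \<Rightarrow> bool" where
  "reduced_word n w is \<longleftrightarrow>
     (\<forall>i \<in> set is. 1 \<le> i \<and> i < n) \<and>
     w = foldr (\<lambda>i acc. s i \<circ> acc) is id \<and>
     length is = inv_count n w"

text \<open>partial_w = partial_(i_1) ... partial_(i_m) for a reduced expression
  (independent of the choice of reduced expression).\<close>
definition dd_perm :: "nat \<Rightarrow> (nat \<Rightarrow> nat) \<Rightarrow> mpoly \<Rightarrow> mpoly" where
  "dd_perm n w f = foldr dd (SOME is. reduced_word n w is) f"

text \<open>Elements of P^omega_n are represented by their coefficient families: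
  alpha in {0,1}^n is identified with the set of positions where alpha_i = 1,
  and v = sum_A f A * omega_A with omega_A the increasing product.\<close>
type_synonym spoly = "nat set \<Rightarrow> mpoly"

definition sgn_pair :: "nat set \<Rightarrow> nat set \<Rightarrow> mpoly" where
  "sgn_pair A B = (- 1) ^ card {(a, b). a \<in> A \<and> b \<in> B \<and> b < a}"

text \<open>Product in P_n tensor the exterior algebra: omega_A omega_B = sign * omega_(A u B).\<close>
definition smult :: "spoly \<Rightarrow> spoly \<Rightarrow> spoly" where
  "smult u v = (\<lambda>C. \<Sum>A \<in> Pow C. sgn_pair A (C - A) * u A * v (C - A))"

definition sadd :: "spoly \<Rightarrow> spoly \<Rightarrow> spoly" where
  "sadd u v = (\<lambda>C. u C + v C)"

definition sconst :: "mpoly \<Rightarrow> spoly" where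
  "sconst p = (\<lambda>A. if A = {} then p else 0)"

definition omega :: "nat \<Rightarrow> spoly" where
  "omega j = (\<lambda>A. if A = {j} then 1 else 0)"

definition s_omega :: "nat \<Rightarrow> nat \<Rightarrow> spoly" where
  "s_omega i j = (if j = i then sadd (omega j) (smult (sconst (Var j - Var (Suc j))) (omega (Suc j)))
                  else omega j)"

definition s_act :: "nat \<Rightarrow> nat \<Rightarrow> spoly \<Rightarrow> spoly" where
  "s_act n i v = (\<lambda>C. \<Sum>A \<in> Pow {1..n}.
      smult (sconst (perm_poly (s i) (v A)))
            (foldr (\<lambda>j acc. smult (s_omega i j) acc) (sorted_list_of_set A) (sconst 1)) C)"

text \<open>Lambda^omega_n: the S_n-invariants, S_n acting through the generators s_1..s_(n-1).\<close>
definition in_Lambda :: "nat \<Rightarrow> spoly \<Rightarrow> bool" where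
  "in_Lambda n v \<longleftrightarrow> (\<forall>i. 1 \<le> i \<and> i < n \<longrightarrow> s_act n i v = v)"

definition sym_block :: "nat \<Rightarrow> nat \<Rightarrow> mpoly set" where
  "sym_block n k = {p \<in> Pn n. \<forall>w. w permutes {1..n} \<and> w ` {1..n-k} = {1..n-k}
                                  \<longrightarrow> perm_poly w p = p}"

definition tau :: "nat \<Rightarrow> nat \<Rightarrow> nat set" where
  "tau n k = {n - k + 1..n}"

definition sigma :: "nat \<Rightarrow> nat set \<Rightarrow> nat \<Rightarrow> nat" where
  "sigma n A i =
     (if 1 \<le> i \<and> i \<le> n - card A then sorted_list_of_set ({1..n} - A) ! (i - 1)
      else if n - card A < i \<and> i \<le> n then sorted_list_of_set A ! (i - (n - card A) - 1)
      else i)"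

end

theory Submission
  imports Defs
begin

text \<open>
  The generator \<open>s\<^sub>i\<close> moves only \<open>\<omega>\<^sub>i\<close>, to \<open>\<omega>\<^sub>i + (x\<^sub>i - x\<^sub>i\<^sub>+\<^sub>1) \<omega>\<^sub>i\<^sub>+\<^sub>1\<close>. Hence the
  coefficient of \<open>\<omega>\<^sub>C\<close> in \<open>s\<^sub>i v\<close> is \<open>s\<^sub>i f\<^sub>C\<close>, plus \<open>(x\<^sub>i - x\<^sub>i\<^sub>+\<^sub>1) s\<^sub>i f\<^sub>C\<^sub>'\<close> when
  \<open>i \<notin> C\<close>, \<open>i+1 \<in> C\<close> and \<open>C'\<close> is \<open>C\<close> with \<open>i+1\<close> replaced by \<open>i\<close>. So \<open>v\<close> is
  \<open>s\<^sub>i\<close>-invariant iff \<open>s\<^sub>i f\<^sub>C = f\<^sub>C\<close> for all other \<open>C\<close> and \<open>f\<^sub>C\<^sub>' = \<partial>\<^sub>i f\<^sub>C\<close>.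

  Among the sets of size \<open>k\<close>, the set \<open>\<tau>\<^sup>(\<^sup>k\<^sup>)\<close> is the only one without a position
  \<open>i \<in> C\<close>, \<open>i+1 \<notin> C\<close>; moving such an \<open>i\<close> up to \<open>i+1\<close> repeatedly reaches
  \<open>\<tau>\<^sup>(\<^sup>k\<^sup>)\<close> along a reduced word of \<open>\<sigma>\<^sub>C\<close>. The second family of relations therefore
  says exactly \<open>f\<^sub>C = \<partial>\<^sub>\<sigma>\<^sub>C F\<^sub>k\<close>, and the first one, at \<open>C = \<tau>\<^sup>(\<^sup>k\<^sup>)\<close>, that \<open>F\<^sub>k\<close> is
  fixed by all \<open>s\<^sub>j\<close> with \<open>j \<noteq> n - k\<close>, i.e. by \<open>S\<^sub>n\<^sub>-\<^sub>k \<times> S\<^sub>k\<close>. Conversely, the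
  first family for general \<open>C\<close> follows from that for \<open>\<tau>\<^sup>(\<^sup>k\<^sup>)\<close> by commuting \<open>s\<^sub>i\<close>
  through \<open>\<partial>\<^sub>\<sigma>\<^sub>C\<close>, using the braid relation of the divided differences where
  \<open>s\<^sub>i\<close> meets an adjacent \<open>\<partial>\<^sub>i\<^sub>\<plusminus>\<^sub>1\<close>.
\<close>

section \<open>Permuting variables\<close>

definition rename_monom :: "(nat \<Rightarrow> nat) \<Rightarrow> (nat \<Rightarrow>\<^sub>0 nat) \<Rightarrow> (nat \<Rightarrow>\<^sub>0 nat)" where
  "rename_monom w m = Abs_poly_mapping (Poly_Mapping.lookup m \<circ> w)"

lemma lookup_rename_monom:
  assumes "inj w"
  shows "Poly_Mapping.lookup (rename_monom w m) = Poly_Mapping.lookup m \<circ> w"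
proof -
  have "{k. (Poly_Mapping.lookup m \<circ> w) k \<noteq> 0} = w -` Poly_Mapping.keys m"
    by (auto simp: in_keys_iff)
  moreover have "finite (w -` Poly_Mapping.keys m)"
    using assms by (intro finite_vimageI) auto
  ultimately show ?thesis
    unfolding rename_monom_def by (subst lookup_Abs_poly_mapping) auto
qed

lemma rename_monom_comp:
  "inj w1 \<Longrightarrow> inj w2 \<Longrightarrow> rename_monom w2 (rename_monom w1 m) = rename_monom (w1 \<circ> w2) m"
  by (rule poly_mapping_eqI) (simp add: lookup_rename_monom inj_compose)

lemma rename_monom_id: "rename_monom id m = m"
  by (rule poly_mapping_eqI) (simp add: lookup_rename_monom)

lemma rename_monom_add: "inj w \<Longrightarrow> rename_monom w (m + m') = rename_monom w m + rename_monom w m'"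
  by (rule poly_mapping_eqI) (simp add: lookup_rename_monom lookup_add)

lemma rename_monom_inv_left: "bij w \<Longrightarrow> rename_monom (inv w) (rename_monom w m) = m"
  by (simp add: rename_monom_comp rename_monom_id bij_is_inj bij_imp_bij_inv
      surj_iff[THEN iffD1, OF bij_is_surj])

lemma rename_monom_inv_right: "bij w \<Longrightarrow> rename_monom w (rename_monom (inv w) m) = m"
  by (simp add: rename_monom_comp rename_monom_id bij_is_inj bij_imp_bij_inv
      inj_iff[THEN iffD1, OF bij_is_inj])

lemma rename_monom_inv_single:
  "bij w \<Longrightarrow> rename_monom (inv w) (Poly_Mapping.single j 1) = Poly_Mapping.single (w j) 1"
  by (rule poly_mapping_eqI)
    (simp add: lookup_rename_monom bij_is_inj bij_imp_bij_inv lookup_single when_def bij_inv_eq_iff)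

lemma lookup_perm_poly:
  assumes "bij w"
  shows "Poly_Mapping.lookup (perm_poly w p) m = Poly_Mapping.lookup p (rename_monom w m)"
proof -
  have "{m. Poly_Mapping.lookup p (rename_monom w m) \<noteq> 0} \<subseteq>
      rename_monom (inv w) ` Poly_Mapping.keys p"
  proof
    fix m assume "m \<in> {m. Poly_Mapping.lookup p (rename_monom w m) \<noteq> 0}"
    then have "rename_monom w m \<in> Poly_Mapping.keys p" by (simp add: in_keys_iff)
    then show "m \<in> rename_monom (inv w) ` Poly_Mapping.keys p"
      using rename_monom_inv_left[OF assms, of m] by (metis image_eqI)
  qed
  then have "finite {m. Poly_Mapping.lookup p (rename_monom w m) \<noteq> 0}"
    by (rule finite_surj[OF finite_keys])
  then show ?thesis unfolding perm_poly_def
    by (subst lookup_Abs_poly_mapping) (auto simp: rename_monom_def[symmetric])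
qed

lemma perm_poly_comp:
  "bij w1 \<Longrightarrow> bij w2 \<Longrightarrow> perm_poly w1 (perm_poly w2 p) = perm_poly (w1 \<circ> w2) p"
  by (rule poly_mapping_eqI) (simp add: lookup_perm_poly bij_comp rename_monom_comp bij_is_inj)

lemma perm_poly_id: "perm_poly id p = p"
  by (rule poly_mapping_eqI) (simp add: lookup_perm_poly rename_monom_id)

lemma perm_poly_add: "bij w \<Longrightarrow> perm_poly w (p + q) = perm_poly w p + perm_poly w q"
  by (rule poly_mapping_eqI) (simp add: lookup_perm_poly lookup_add)

lemma perm_poly_diff: "bij w \<Longrightarrow> perm_poly w (p - q) = perm_poly w p - perm_poly w q"
  by (rule poly_mapping_eqI) (simp add: lookup_perm_poly lookup_minus)

lemma perm_poly_zero: "bij w \<Longrightarrow> perm_poly w 0 = 0"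
  by (rule poly_mapping_eqI) (simp add: lookup_perm_poly)

lemma perm_poly_sum: "bij w \<Longrightarrow> perm_poly w (sum g X) = (\<Sum>x\<in>X. perm_poly w (g x))"
  by (induction X rule: infinite_finite_induct) (auto simp: perm_poly_zero perm_poly_add)

lemma perm_poly_single:
  "bij w \<Longrightarrow> perm_poly w (Poly_Mapping.single m c) = Poly_Mapping.single (rename_monom (inv w) m) c"
  by (rule poly_mapping_eqI)
    (metis lookup_perm_poly lookup_single_eq lookup_single_not_eq
      rename_monom_inv_left rename_monom_inv_right)

lemma poly_mapping_sum_single:
  "(p :: 'a \<Rightarrow>\<^sub>0 'b::comm_monoid_add) =
     (\<Sum>m\<in>Poly_Mapping.keys p. Poly_Mapping.single m (Poly_Mapping.lookup p m))"
  by (rule poly_mapping_eqI) (simp add: lookup_sum lookup_single when_def in_keys_iff)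

lemma perm_poly_mult:
  assumes "bij w"
  shows "perm_poly w (p * q) = perm_poly w p * perm_poly w q"
proof -
  have inj: "inj (inv w)" using assms bij_imp_bij_inv bij_is_inj by blast
  let ?P = "Poly_Mapping.keys p" and ?Q = "Poly_Mapping.keys q"
  let ?c = "\<lambda>m m'. Poly_Mapping.lookup p m * Poly_Mapping.lookup q m'"
  have "p * q = (\<Sum>m\<in>?P. \<Sum>m'\<in>?Q. Poly_Mapping.single (m + m') (?c m m'))"
    by (subst poly_mapping_sum_single[of p], subst poly_mapping_sum_single[of q])
      (simp add: sum_product mult_single)
  then have "perm_poly w (p * q) = (\<Sum>m\<in>?P. \<Sum>m'\<in>?Q.
      Poly_Mapping.single (rename_monom (inv w) m + rename_monom (inv w) m') (?c m m'))"
    by (simp add: perm_poly_sum assms perm_poly_single rename_monom_add inj)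
  also have "\<dots> =
      (\<Sum>m\<in>?P. Poly_Mapping.single (rename_monom (inv w) m) (Poly_Mapping.lookup p m)) *
      (\<Sum>m\<in>?Q. Poly_Mapping.single (rename_monom (inv w) m) (Poly_Mapping.lookup q m))"
    by (simp add: sum_product mult_single)
  also have "\<dots> = perm_poly w p * perm_poly w q"
    by (subst (3) poly_mapping_sum_single[of p], subst (3) poly_mapping_sum_single[of q])
      (simp add: perm_poly_sum assms perm_poly_single)
  finally show ?thesis .
qed

lemma perm_poly_Var: "bij w \<Longrightarrow> perm_poly w (Var j) = Var (w j)"
  unfolding Var_def by (simp only: perm_poly_single rename_monom_inv_single)

section \<open>Divided differences\<close>

abbreviation S :: "nat \<Rightarrow> mpoly \<Rightarrow> mpoly" where
  "S i \<equiv> perm_poly (s i)"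

abbreviation xdiff :: "nat \<Rightarrow> mpoly" where
  "xdiff j \<equiv> Var j - Var (Suc j)"

lemma bij_s [simp]: "bij (s i)"
  by (simp add: s_def)

lemma inv_s [simp]: "inv (s i) = s i"
  by (simp add: s_def)

lemma s_comp_s [simp]: "s i \<circ> s i = id"
  by (simp add: s_def)

lemma s_apply: "s i j = (if j = i then Suc i else if j = Suc i then i else j)"
  by (simp add: s_def transpose_def)

lemma S_S [simp]: "S i (S i f) = f"
  by (simp add: perm_poly_comp perm_poly_id)

lemma S_Var: "S i (Var j) = Var (s i j)"
  by (simp add: perm_poly_Var)

lemma S_mult: "S i (p * q) = S i p * S i q"
  by (simp add: perm_poly_mult)

lemma S_add: "S i (p + q) = S i p + S i q"
  by (simp add: perm_poly_add)

lemma S_diff: "S i (p - q) = S i p - S i q"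
  by (simp add: perm_poly_diff)

lemma S_zero: "S i 0 = 0"
  by (simp add: perm_poly_zero)

lemma Var_eq_iff: "Var i = Var j \<longleftrightarrow> i = j"
  unfolding Var_def by (metis inj_single injD lookup_single_eq lookup_single_not_eq one_neq_zero)

lemma xdiff_neq_zero: "xdiff i \<noteq> 0"
  using Var_eq_iff[of i "Suc i"] by simp

lemma diff_dvd_power_mult_swap:
  "((x::'a::comm_ring_1) - y) dvd (x ^ a * y ^ b - y ^ a * x ^ b)"
proof -
  have dvd_pow: "(x - y) dvd (x ^ d - y ^ d)" for d
    by (simp add: power_diff_sumr2)
  show ?thesis
  proof (cases "b \<le> a")
    case True
    then obtain d where "a = b + d" using le_Suc_ex by blast
    then have "x ^ a * y ^ b - y ^ a * x ^ b = (x ^ b * y ^ b) * (x ^ d - y ^ d)"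
      by (simp add: power_add algebra_simps)
    then show ?thesis using dvd_pow[of d] by (metis dvd_mult)
  next
    case False
    then obtain d where "b = a + d" by (metis le_Suc_ex nat_le_linear)
    then have "x ^ a * y ^ b - y ^ a * x ^ b = - ((x ^ a * y ^ a) * (x ^ d - y ^ d))"
      by (simp add: power_add algebra_simps)
    then show ?thesis using dvd_pow[of d] by (metis dvd_minus_iff dvd_mult)
  qed
qed

lemma single_single_eq_Var_power: "Poly_Mapping.single (Poly_Mapping.single i a) 1 = Var i ^ a"
proof (induction a)
  case (Suc a)
  have "Var i ^ Suc a = Var i * Poly_Mapping.single (Poly_Mapping.single i a) 1"
    using Suc by simp
  also have "\<dots> = Poly_Mapping.single (Poly_Mapping.single i 1 + Poly_Mapping.single i a) 1"
    unfolding Var_def by (simp only: mult_single mult_1)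
  finally show ?case by (simp add: single_add[symmetric])
qed simp

text \<open>Write the monomial as \<open>r x\<^sub>i\<^sup>a x\<^sub>i\<^sub>+\<^sub>1\<^sup>b\<close>; then \<open>s\<^sub>i\<close> only swaps \<open>a\<close> and \<open>b\<close>.\<close>
lemma xdiff_dvd_single_diff_S:
  "xdiff i dvd (Poly_Mapping.single m c - S i (Poly_Mapping.single m c))"
proof -
  define a where "a = Poly_Mapping.lookup m i"
  define b where "b = Poly_Mapping.lookup m (Suc i)"
  define r where "r = m - Poly_Mapping.single i a - Poly_Mapping.single (Suc i) b"
  have m: "m = r + Poly_Mapping.single i a + Poly_Mapping.single (Suc i) b"
    by (rule poly_mapping_eqI)
      (auto simp: r_def a_def b_def lookup_add lookup_minus lookup_single when_def)
  have sm: "rename_monom (s i) m = r + Poly_Mapping.single (Suc i) a + Poly_Mapping.single i b"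
    by (rule poly_mapping_eqI)
      (auto simp: lookup_rename_monom r_def a_def b_def lookup_add lookup_minus lookup_single
        when_def s_apply bij_is_inj)
  have "Poly_Mapping.single m c = Poly_Mapping.single r c * (Var i ^ a * Var (Suc i) ^ b)"
    by (subst m) (simp add: single_single_eq_Var_power[symmetric] mult_single add.assoc)
  moreover have "S i (Poly_Mapping.single m c) =
      Poly_Mapping.single r c * (Var (Suc i) ^ a * Var i ^ b)"
    by (simp add: perm_poly_single sm single_single_eq_Var_power[symmetric] mult_single add.assoc)
  ultimately have "Poly_Mapping.single m c - S i (Poly_Mapping.single m c) =
      Poly_Mapping.single r c * (Var i ^ a * Var (Suc i) ^ b - Var (Suc i) ^ a * Var i ^ b)"
    by (simp add: algebra_simps)
  then show ?thesis using diff_dvd_power_mult_swap by (metis dvd_mult)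
qed

lemma xdiff_dvd_diff_S: "xdiff i dvd (f - S i f)"
proof -
  have "xdiff i dvd ((\<Sum>m\<in>M. Poly_Mapping.single m (Poly_Mapping.lookup f m)) -
      S i (\<Sum>m\<in>M. Poly_Mapping.single m (Poly_Mapping.lookup f m)))" for M
  proof (induction M rule: infinite_finite_induct)
    case (insert x F)
    then show ?case
      using dvd_add[OF xdiff_dvd_single_diff_S[of i x "Poly_Mapping.lookup f x"] insert(3)]
      by (simp add: S_add algebra_simps)
  qed (simp_all add: S_zero)
  then show ?thesis using poly_mapping_sum_single[of f] by metis
qed

lemma xdiff_mult_dd: "xdiff i * dd i f = f - S i f"
proof -
  obtain g where "f - S i f = xdiff i * g" using xdiff_dvd_diff_S by (metis dvdE)
  then have "\<exists>!g. xdiff i * g = f - S i f"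
    using xdiff_neq_zero by (metis mult_left_cancel)
  then show ?thesis unfolding dd_def by (rule theI')
qed

lemma dd_eqI: "xdiff i * g = f - S i f \<Longrightarrow> dd i f = g"
  using xdiff_mult_dd[of i f] xdiff_neq_zero by (metis mult_left_cancel)

lemma S_dd: "S i (dd i f) = dd i f"
proof -
  have "S i (xdiff i) = - xdiff i"
    by (simp add: S_diff S_Var s_apply)
  then have "- xdiff i * S i (dd i f) = S i f - f"
    by (metis S_S S_diff S_mult xdiff_mult_dd)
  then have "xdiff i * S i (dd i f) = f - S i f"
    by (simp add: algebra_simps)
  then show ?thesis using dd_eqI by metis
qed

lemma dd_eq_0_iff: "dd i f = 0 \<longleftrightarrow> S i f = f"
  using xdiff_mult_dd[of i f] xdiff_neq_zero by (metis eq_iff_diff_eq_0 mult_zero_right no_zero_divisors)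

lemma dd_zero: "dd i 0 = 0"
  by (simp add: dd_eq_0_iff S_zero)

lemma S_commute: "Suc j < i \<or> Suc i < j \<Longrightarrow> S i (S j f) = S j (S i f)"
proof -
  assume "Suc j < i \<or> Suc i < j"
  then have "s i \<circ> s j = s j \<circ> s i"
    by (auto simp: fun_eq_iff s_apply)
  then show ?thesis by (metis perm_poly_comp bij_s)
qed

lemma S_dd_commute:
  assumes "Suc j < i \<or> Suc i < j"
  shows "S j (dd i f) = dd i (S j f)"
proof -
  have "S j (xdiff i * dd i f) = S j (f - S i f)"
    by (simp only: xdiff_mult_dd)
  then have "xdiff i * S j (dd i f) = S j f - S i (S j f)"
    using assms S_commute[OF assms] by (auto simp: S_mult S_diff S_Var s_apply)
  then show ?thesis by (metis dd_eqI)
qed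

lemma dd_commute:
  assumes "Suc j < i \<or> Suc i < j"
  shows "dd i (dd j f) = dd j (dd i f)"
proof -
  have expand: "xdiff i * xdiff j * dd i (dd j f) = f - S j f - S i f + S i (S j f)"
    if "Suc j < i \<or> Suc i < j" for i j
  proof -
    have "xdiff i * xdiff j * dd i (dd j f) = xdiff j * (xdiff i * dd i (dd j f))"
      by (simp only: ac_simps)
    also have "\<dots> = xdiff j * dd j f - xdiff j * S i (dd j f)"
      by (simp only: xdiff_mult_dd right_diff_distrib)
    also have "S i (dd j f) = dd j (S i f)"
      using that S_dd_commute[of i j] by auto
    also have "xdiff j * dd j f - xdiff j * dd j (S i f) = f - S j f - (S i f - S j (S i f))"
      by (simp only: xdiff_mult_dd)
    finally show ?thesis
      using S_commute[OF that] by simp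
  qed
  have "xdiff j * xdiff i * dd j (dd i f) = f - S i f - S j f + S j (S i f)"
    using assms by (intro expand) auto
  then have "xdiff i * xdiff j * dd i (dd j f) = xdiff i * xdiff j * dd j (dd i f)"
    using expand[OF assms] S_commute[OF assms, of f] by (simp add: ac_simps)
  then show ?thesis
    using xdiff_neq_zero by simp
qed

text \<open>Both sides of the braid relation, multiplied by \<open>\<Delta> = (x\<^sub>p - x\<^sub>q)(x\<^sub>q - x\<^sub>r)(x\<^sub>p - x\<^sub>r)\<close>,
  equal the alternating sum of \<open>f\<close> over the six permutations of \<open>x\<^sub>p, x\<^sub>q, x\<^sub>r\<close>. The
  ring identity below is that telescoping, with an extra factor \<open>a1\<close> that is
  cancelled afterwards.\<close>
lemma braid_ring_identity:
  fixes a1 a2 a3 f sf tf tsf stf stsf g1 g2 g3 sg2 tg1 stg1 :: "'a::comm_ring_1"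
  assumes "a3 = a1 + a2" "a1 * g1 = f - sf" "a2 * g2 = g1 - tg1" "a1 * g3 = g2 - sg2"
    "a3 * sg2 = g1 - stg1" "a3 * tg1 = tf - tsf" "a2 * stg1 = stf - stsf"
  shows "a1 * (a1 * a2 * a3 * g3) = a1 * (f - sf - tf + tsf + stf - stsf)"
proof -
  have "a1 * (a1 * a2 * a3 * g3) - a1 * (f - sf - tf + tsf + stf - stsf) =
    a1 * a2 * a3 * (a1 * g3 - (g2 - sg2)) + a1 * a3 * (a2 * g2 - (g1 - tg1))
    - a1 * a2 * (a3 * sg2 - (g1 - stg1)) + a1 * (a1 * g1 - (f - sf))
    - a1 * (a3 * tg1 - (tf - tsf)) + a1 * (a2 * stg1 - (stf - stsf))"
    unfolding assms(1) by (simp add: algebra_simps)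
  then show ?thesis using assms(2-) by simp
qed

lemma xdiff_mult_dd_dd_dd:
  assumes "S p (xdiff q) = a3" "S q (xdiff p) = a3" "S p a3 = xdiff q" "a3 = xdiff p + xdiff q"
  shows "xdiff p * xdiff q * a3 * dd p (dd q (dd p f)) =
         f - S p f - S q f + S q (S p f) + S p (S q f) - S p (S q (S p f))"
proof -
  define g1 where "g1 = dd p f"
  define g2 where "g2 = dd q g1"
  have H1: "xdiff p * g1 = f - S p f" unfolding g1_def by (rule xdiff_mult_dd)
  have H2: "xdiff q * g2 = g1 - S q g1" unfolding g2_def by (rule xdiff_mult_dd)
  have H3: "xdiff p * dd p g2 = g2 - S p g2" by (rule xdiff_mult_dd)
  have H4: "a3 * S p g2 = g1 - S p (S q g1)"
    using arg_cong[OF H2, of "S p"] assms(1) S_dd[of p f]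
    unfolding g1_def[symmetric] by (simp only: S_mult S_diff)
  have H5: "a3 * S q g1 = S q f - S q (S p f)"
    using arg_cong[OF H1, of "S q"] assms(2) by (simp only: S_mult S_diff)
  have H6: "xdiff q * S p (S q g1) = S p (S q f) - S p (S q (S p f))"
    using arg_cong[OF H5, of "S p"] assms(3) by (simp only: S_mult S_diff)
  show ?thesis
    using braid_ring_identity[OF assms(4) H1 H2 H3 H4 H5 H6] xdiff_neq_zero
    unfolding g2_def g1_def by simp
qed

lemma dd_braid: "dd i (dd (Suc i) (dd i f)) = dd (Suc i) (dd i (dd (Suc i) f))"
proof -
  let ?\<Delta> = "xdiff i * xdiff (Suc i) * (Var i - Var (Suc (Suc i)))"
  have "S i (S (Suc i) (S i f)) = S (Suc i) (S i (S (Suc i) f))"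
  proof -
    have "s i \<circ> (s (Suc i) \<circ> s i) = s (Suc i) \<circ> (s i \<circ> s (Suc i))"
      by (auto simp: fun_eq_iff s_apply)
    then show ?thesis by (simp add: perm_poly_comp bij_comp)
  qed
  then have "f - S i f - S (Suc i) f + S (Suc i) (S i f) + S i (S (Suc i) f) - S i (S (Suc i) (S i f)) =
      f - S (Suc i) f - S i f + S i (S (Suc i) f) + S (Suc i) (S i f) - S (Suc i) (S i (S (Suc i) f))"
    by (simp add: algebra_simps)
  then have "?\<Delta> * dd i (dd (Suc i) (dd i f)) =
      xdiff (Suc i) * xdiff i * (Var i - Var (Suc (Suc i))) * dd (Suc i) (dd i (dd (Suc i) f))"
    by (subst (1 2) xdiff_mult_dd_dd_dd) (simp_all add: S_diff S_Var s_apply)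
  moreover have "?\<Delta> \<noteq> 0"
    using xdiff_neq_zero Var_eq_iff by auto
  ultimately show ?thesis
    by (simp add: ac_simps)
qed

section \<open>The action of \<open>s\<^sub>i\<close> on coefficient families\<close>

definition omega_set :: "nat set \<Rightarrow> spoly" where
  "omega_set B = (\<lambda>C. if C = B then 1 else 0)"

definition scale :: "mpoly \<Rightarrow> spoly \<Rightarrow> spoly" where
  "scale c u = (\<lambda>C. c * u C)"

lemma smult_infinite: "infinite C \<Longrightarrow> smult u v C = 0"
  by (simp add: smult_def)

lemma smult_sconst: "finite C \<Longrightarrow> smult (sconst c) u C = c * u C"
proof -
  assume "finite C"
  have "smult (sconst c) u C = (\<Sum>A\<in>Pow C. (if A = {} then c * u C else 0))"
    unfolding smult_def sconst_def by (rule sum.cong) (auto simp: sgn_pair_def)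
  then show ?thesis using \<open>finite C\<close> by (simp add: sum.delta)
qed

lemma smult_sadd_left: "smult (sadd u u') v = sadd (smult u v) (smult u' v)"
  by (simp add: smult_def sadd_def fun_eq_iff algebra_simps sum.distrib)

lemma smult_sadd_right: "smult u (sadd v v') = sadd (smult u v) (smult u v')"
  by (simp add: smult_def sadd_def fun_eq_iff algebra_simps sum.distrib)

lemma smult_scale_left: "smult (scale c u) v = scale c (smult u v)"
  by (simp add: smult_def scale_def fun_eq_iff algebra_simps sum_distrib_left)

lemma smult_scale_right: "smult u (scale c v) = scale c (smult u v)"
  by (simp add: smult_def scale_def fun_eq_iff algebra_simps sum_distrib_left)

lemma sadd_zero: "sadd u (\<lambda>C. 0) = u"
  by (simp add: sadd_def)

lemma scale_zero: "scale c (\<lambda>C. 0) = (\<lambda>C. 0)"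
  by (simp add: scale_def)

lemma smult_omega:
  assumes "finite C"
  shows "smult (omega j) v C = (if j \<in> C then sgn_pair {j} (C - {j}) * v (C - {j}) else 0)"
proof -
  have "smult (omega j) v C =
      (\<Sum>A\<in>Pow C. (if A = {j} then sgn_pair {j} (C - {j}) * v (C - {j}) else 0))"
    unfolding smult_def omega_def by (rule sum.cong) auto
  then show ?thesis using assms by (simp add: sum.delta)
qed

lemma sgn_pair_singleton_less:
  assumes "\<forall>b\<in>B. j < b"
  shows "sgn_pair {j} B = 1"
proof -
  have "{(a, b). a \<in> {j} \<and> b \<in> B \<and> b < a} = {}" using assms by auto
  then show ?thesis unfolding sgn_pair_def by (metis card.empty power_0)
qed

lemma smult_omega_omega_set_less:
  assumes "finite B" "\<forall>b\<in>B. j < b"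
  shows "smult (omega j) (omega_set B) = omega_set (insert j B)"
proof
  fix C
  show "smult (omega j) (omega_set B) C = omega_set (insert j B) C"
  proof (cases "finite C")
    case False
    then have "C \<noteq> insert j B" using assms(1) by auto
    then show ?thesis using False by (simp add: smult_infinite omega_set_def)
  next
    case True
    have "C - {j} = B \<and> j \<in> C \<longleftrightarrow> C = insert j B" using assms(2) by auto
    then show ?thesis using True
      by (auto simp: smult_omega omega_set_def sgn_pair_singleton_less[OF assms(2)])
  qed
qed

lemma smult_omega_omega_set_mem:
  assumes "j \<in> B"
  shows "smult (omega j) (omega_set B) = (\<lambda>C. 0)"
proof
  fix C
  show "smult (omega j) (omega_set B) C = 0"
    by (cases "finite C") (auto simp: smult_infinite smult_omega omega_set_def assms)
qed

lemma smult_sconst_omega: "smult (sconst c) (omega j) = scale c (omega j)"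
proof
  fix C
  show "smult (sconst c) (omega j) C = scale c (omega j) C"
    by (cases "finite C") (auto simp: smult_infinite smult_sconst scale_def omega_def)
qed

definition s_omega_prod :: "nat \<Rightarrow> nat list \<Rightarrow> spoly" where
  "s_omega_prod i L = foldr (\<lambda>j acc. smult (s_omega i j) acc) L (sconst 1)"

lemma s_omega_prod_sorted:
  "sorted_wrt (<) L \<Longrightarrow> s_omega_prod i L =
     (if i \<in> set L \<and> Suc i \<notin> set L
      then sadd (omega_set (set L)) (scale (xdiff i) (omega_set (insert (Suc i) (set L - {i}))))
      else omega_set (set L))"
proof (induction L)
  case Nil
  then show ?case by (simp add: s_omega_prod_def sconst_def omega_set_def)
next
  case (Cons a L)
  have sL: "sorted_wrt (<) L" and lt: "\<forall>b\<in>set L. a < b" using Cons.prems by auto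
  have IH: "s_omega_prod i L = (if i \<in> set L \<and> Suc i \<notin> set L
      then sadd (omega_set (set L)) (scale (xdiff i) (omega_set (insert (Suc i) (set L - {i}))))
      else omega_set (set L))"
    using Cons.IH[OF sL] .
  have cons: "s_omega_prod i (a # L) = smult (s_omega i a) (s_omega_prod i L)"
    by (simp add: s_omega_prod_def)
  show ?case
  proof (cases "a = i")
    case a_neq: False
    then have so: "s_omega i a = omega a" by (simp add: s_omega_def)
    show ?thesis
    proof (cases "i \<in> set L \<and> Suc i \<notin> set L")
      case True
      have "\<forall>b\<in>insert (Suc i) (set L - {i}). a < b" using lt True by auto
      moreover have "insert a (insert (Suc i) (set L - {i})) = insert (Suc i) (insert a (set L) - {i})"
        using a_neq by auto
      ultimately show ?thesis using True a_neq lt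
        by (simp add: cons IH so smult_sadd_right smult_scale_right smult_omega_omega_set_less)
    next
      case False
      then show ?thesis using a_neq lt
        by (auto simp add: cons IH so smult_omega_omega_set_less)
    qed
  next
    case True
    have iL: "i \<notin> set L" and lti: "\<forall>b\<in>set L. i < b" using lt True by auto
    have so: "s_omega i i = sadd (omega i) (scale (xdiff i) (omega (Suc i)))"
      by (simp add: s_omega_def smult_sconst_omega)
    show ?thesis
    proof (cases "Suc i \<in> set L")
      case True
      then show ?thesis unfolding \<open>a = i\<close>
        by (simp add: cons[unfolded \<open>a = i\<close>] IH iL so smult_sadd_left smult_scale_left
            smult_omega_omega_set_less[OF _ lti] smult_omega_omega_set_mem scale_zero sadd_zero)
    next
      case False
      then have "\<forall>b\<in>set L. Suc i < b" using lti by (metis Suc_lessI)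
      moreover have "set L - {i} = set L" using iL by auto
      ultimately show ?thesis using False unfolding \<open>a = i\<close>
        by (simp add: cons[unfolded \<open>a = i\<close>] IH iL so smult_sadd_left smult_scale_left
            smult_omega_omega_set_less[OF _ lti] smult_omega_omega_set_less)
    qed
  qed
qed

lemma s_omega_prod_sorted_list_apply:
  assumes "finite B"
  shows "s_omega_prod i (sorted_list_of_set B) C = omega_set B C +
    (if i \<in> B \<and> Suc i \<notin> B then xdiff i * omega_set (insert (Suc i) (B - {i})) C else 0)"
  using s_omega_prod_sorted[of "sorted_list_of_set B" i] assms by (simp add: sadd_def scale_def)

lemma s_act_apply:
  assumes "1 \<le> i" "Suc i \<le> n"
  shows "s_act n i v C = (if C \<subseteq> {1..n} then S i (v C) +
     (if i \<notin> C \<and> Suc i \<in> C then xdiff i * S i (v (insert i (C - {Suc i}))) else 0) else 0)"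
proof (cases "finite C")
  case False
  then have "\<not> C \<subseteq> {1..n}" using finite_subset by blast
  then show ?thesis using False unfolding s_act_def by (simp add: smult_infinite)
next
  case True
  let ?X = "insert i (C - {Suc i})"
  have "s_act n i v C = (\<Sum>B\<in>Pow {1..n}. S i (v B) * s_omega_prod i (sorted_list_of_set B) C)"
    unfolding s_act_def s_omega_prod_def[symmetric] using True by (simp add: smult_sconst)
  also have "\<dots> = (\<Sum>B\<in>Pow {1..n}. (if B = C then S i (v C) else 0)) +
      (\<Sum>B\<in>Pow {1..n}. (if B = ?X then
        (if i \<notin> C \<and> Suc i \<in> C then xdiff i * S i (v ?X) else 0) else 0))"
    unfolding sum.distrib[symmetric]
  proof (rule sum.cong)
    fix B assume "B \<in> Pow {1..n}"
    then have "finite B" using finite_subset by auto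
    moreover have "(i \<in> B \<and> Suc i \<notin> B \<and> insert (Suc i) (B - {i}) = C) \<longleftrightarrow>
        (B = ?X \<and> i \<notin> C \<and> Suc i \<in> C)"
      by auto
    ultimately show "S i (v B) * s_omega_prod i (sorted_list_of_set B) C =
        (if B = C then S i (v C) else 0) +
        (if B = ?X then (if i \<notin> C \<and> Suc i \<in> C then xdiff i * S i (v ?X) else 0) else 0)"
      unfolding s_omega_prod_sorted_list_apply[OF \<open>finite B\<close>]
      by (auto simp: omega_set_def algebra_simps)
  qed simp
  also have "\<dots> = (if C \<subseteq> {1..n} then S i (v C) else 0) +
      (if ?X \<subseteq> {1..n} then (if i \<notin> C \<and> Suc i \<in> C then xdiff i * S i (v ?X) else 0) else 0)"
    by (simp add: sum.delta)
  also have "\<dots> = (if C \<subseteq> {1..n} then S i (v C) +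
     (if i \<notin> C \<and> Suc i \<in> C then xdiff i * S i (v ?X) else 0) else 0)"
    using assms by auto
  finally show ?thesis .
qed

text \<open>The componentwise form of \<open>s\<^sub>i v = v\<close> for all \<open>1 \<le> i < n\<close>.\<close>
definition coeff_relations :: "nat \<Rightarrow> spoly \<Rightarrow> bool" where
  "coeff_relations n f \<longleftrightarrow> (\<forall>i C. 1 \<le> i \<and> i < n \<and> C \<subseteq> {1..n} \<longrightarrow>
     (\<not> (i \<notin> C \<and> Suc i \<in> C) \<longrightarrow> S i (f C) = f C) \<and>
     (i \<notin> C \<and> Suc i \<in> C \<longrightarrow> f (insert i (C - {Suc i})) = dd i (f C)))"

lemma in_Lambda_iff_coeff_relations:
  assumes "\<forall>A. \<not> A \<subseteq> {1..n} \<longrightarrow> f A = 0"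
  shows "in_Lambda n f \<longleftrightarrow> coeff_relations n f"
proof
  assume L: "in_Lambda n f"
  show "coeff_relations n f" unfolding coeff_relations_def
  proof (intro allI impI conjI)
    fix i C assume h: "1 \<le> i \<and> i < n \<and> C \<subseteq> {1..n}"
    then have "s_act n i f D = f D" for D using L unfolding in_Lambda_def by metis
    then have act: "f D = (if D \<subseteq> {1..n} then S i (f D) + (if i \<notin> D \<and> Suc i \<in> D
        then xdiff i * S i (f (insert i (D - {Suc i}))) else 0) else 0)" for D
      using h s_act_apply[of i n f D] by simp
    show "S i (f C) = f C" if "\<not> (i \<notin> C \<and> Suc i \<in> C)"
      using act[of C] that h by (auto split: if_splits)
    assume c: "i \<notin> C \<and> Suc i \<in> C"
    let ?X = "insert i (C - {Suc i})"
    have "?X \<subseteq> {1..n}" "\<not> (i \<notin> ?X \<and> Suc i \<in> ?X)" using h c by auto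
    then have "S i (f ?X) = f ?X" using act[of ?X] by simp
    then have "f C = S i (f C) + xdiff i * f ?X" using act[of C] h c by simp
    then have "xdiff i * f ?X = f C - S i (f C)" by (simp add: algebra_simps)
    then show "f ?X = dd i (f C)" by (metis dd_eqI)
  qed
next
  assume R: "coeff_relations n f"
  show "in_Lambda n f" unfolding in_Lambda_def
  proof (intro allI impI ext)
    fix i C assume h: "1 \<le> i \<and> i < n"
    have "S i (f C) + xdiff i * S i (f (insert i (C - {Suc i}))) = f C"
      if "C \<subseteq> {1..n}" "i \<notin> C \<and> Suc i \<in> C"
      using R h that unfolding coeff_relations_def by (simp add: S_dd xdiff_mult_dd)
    moreover have "S i (f C) = f C" if "C \<subseteq> {1..n}" "\<not> (i \<notin> C \<and> Suc i \<in> C)"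
      using R h that unfolding coeff_relations_def by blast
    ultimately show "s_act n i f C = f C"
      using h assms by (auto simp: s_act_apply)
  qed
qed

section \<open>Inversions and reduced words\<close>

definition inversions :: "nat \<Rightarrow> (nat \<Rightarrow> nat) \<Rightarrow> (nat \<times> nat) set" where
  "inversions n w = {(i, j). 1 \<le> i \<and> i < j \<and> j \<le> n \<and> w j < w i}"

lemma inv_count_eq_card_inversions: "inv_count n w = card (inversions n w)"
  by (simp add: inv_count_def inversions_def)

lemma finite_inversions: "finite (inversions n w)"
  by (rule finite_subset[of _ "{1..n} \<times> {1..n}"]) (auto simp: inversions_def)

lemma inv_count_id: "inv_count n id = 0"
proof -
  have "inversions n id = {}" by (auto simp: inversions_def)
  then show ?thesis by (simp add: inv_count_eq_card_inversions)
qed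

lemma s_less_s_iff:
  "x \<noteq> y \<Longrightarrow> \<not> (x = i \<and> y = Suc i) \<Longrightarrow> \<not> (y = i \<and> x = Suc i) \<Longrightarrow> s i y < s i x \<longleftrightarrow> y < x"
  by (auto simp: s_apply)

lemma s_strict_mono: "a < b \<Longrightarrow> \<not> (a = i \<and> b = Suc i) \<Longrightarrow> s i a < s i b"
  by (auto simp: s_apply)

lemma s_permutes: "1 \<le> i \<Longrightarrow> i < n \<Longrightarrow> s i permutes {1..n}"
  unfolding s_def by (rule permutes_swap_id) auto

lemma s_image_eq: "(i \<in> B \<longleftrightarrow> Suc i \<in> B) \<Longrightarrow> s i ` B = B"
  by (cases "i \<in> B") (auto simp: s_def s_apply)

lemma inversions_s_comp_iff:
  assumes "inj w" "w p = i" "w q = Suc i" "(a, b) \<noteq> (p, q)" "(a, b) \<noteq> (q, p)"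
  shows "(a, b) \<in> inversions n (s i \<circ> w) \<longleftrightarrow> (a, b) \<in> inversions n w"
proof -
  have "a < b \<Longrightarrow> w a \<noteq> w b" using assms(1) by (auto dest: injD)
  moreover have "\<not> (w a = i \<and> w b = Suc i)" "\<not> (w b = i \<and> w a = Suc i)"
    using assms by (metis injD)+
  ultimately show ?thesis
    unfolding inversions_def using s_less_s_iff[of "w a" "w b" i] by auto
qed

lemma inv_count_s_comp_less:
  assumes "inj w" "p \<in> {1..n}" "w p = i" "q \<in> {1..n}" "w q = Suc i" "p < q"
  shows "inv_count n (s i \<circ> w) = Suc (inv_count n w)"
proof -
  have "inversions n (s i \<circ> w) = insert (p, q) (inversions n w)"
  proof (rule set_eqI)
    fix x :: "nat \<times> nat"
    obtain a b where x: "x = (a, b)" by fastforce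
    have "(p, q) \<in> inversions n (s i \<circ> w)" "(q, p) \<notin> inversions n (s i \<circ> w)"
      "(q, p) \<notin> inversions n w"
      using assms by (auto simp: inversions_def s_apply)
    then show "x \<in> inversions n (s i \<circ> w) \<longleftrightarrow> x \<in> insert (p, q) (inversions n w)"
      unfolding x using inversions_s_comp_iff[OF assms(1,3,5), of a b n] by auto
  qed
  moreover have "(p, q) \<notin> inversions n w"
    using assms by (auto simp: inversions_def)
  ultimately show ?thesis
    by (simp add: inv_count_eq_card_inversions finite_inversions)
qed

lemma inv_count_s_comp_greater:
  assumes "inj w" "p \<in> {1..n}" "w p = i" "q \<in> {1..n}" "w q = Suc i" "q < p"
  shows "inv_count n w = Suc (inv_count n (s i \<circ> w))"
proof -
  have "inj (s i \<circ> w)" using assms(1) by (simp add: bij_is_inj inj_compose)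
  moreover have "(s i \<circ> w) q = i" "(s i \<circ> w) p = Suc i"
    using assms by (auto simp: s_apply)
  ultimately have "inv_count n (s i \<circ> (s i \<circ> w)) = Suc (inv_count n (s i \<circ> w))"
    using assms by (intro inv_count_s_comp_less[of _ q _ _ p]) auto
  then show ?thesis
    by (simp add: comp_assoc[symmetric])
qed

lemma permutes_obtain_preimage:
  assumes "w permutes {1..n}" "x \<in> {1..n}"
  obtains p where "p \<in> {1..n}" "w p = x"
  using permutes_image[OF assms(1)] assms(2) by (metis imageE)

lemma inv_count_s_comp_le:
  assumes "w permutes {1..n}" "1 \<le> i" "i < n"
  shows "inv_count n (s i \<circ> w) \<le> Suc (inv_count n w)"
proof -
  obtain p where p: "p \<in> {1..n}" "w p = i"
    using permutes_obtain_preimage[OF assms(1), of i] assms by auto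
  obtain q where q: "q \<in> {1..n}" "w q = Suc i"
    using permutes_obtain_preimage[OF assms(1), of "Suc i"] assms by auto
  have "inj w" using assms(1) by (rule permutes_inj)
  moreover have "p \<noteq> q" using p q by auto
  ultimately show ?thesis
    using inv_count_s_comp_less[of w p n i q] inv_count_s_comp_greater[of w p n i q] p q
    by (cases "p < q") auto
qed

abbreviation word_perm :: "nat list \<Rightarrow> nat \<Rightarrow> nat" where
  "word_perm is \<equiv> foldr (\<lambda>i acc. s i \<circ> acc) is id"

lemma word_perm_permutes_inv_count_le:
  assumes "\<forall>i\<in>set is. 1 \<le> i \<and> i < n"
  shows "word_perm is permutes {1..n} \<and> inv_count n (word_perm is) \<le> length is"
  using assms
proof (induction "is")
  case Nil
  show ?case
    using inv_count_id[of n] permutes_id[of "{1..n}"] by (simp add: id_def)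
next
  case (Cons i r)
  have "\<forall>i\<in>set r. 1 \<le> i \<and> i < n" using Cons.prems by simp
  then have "word_perm r permutes {1..n}" "inv_count n (word_perm r) \<le> length r"
    using Cons.IH by blast+
  moreover have "1 \<le> i" "i < n" using Cons.prems by auto
  ultimately have "s i \<circ> word_perm r permutes {1..n}"
    "inv_count n (s i \<circ> word_perm r) \<le> Suc (length r)"
    using permutes_compose[OF _ s_permutes] inv_count_s_comp_le[of "word_perm r" n i] by fastforce+
  then show ?case
    unfolding foldr_Cons o_apply length_Cons by blast
qed

section \<open>The shuffle permutations \<open>\<sigma>\<^sub>A\<close>\<close>

lemma card_less_in_image_strict_mono_on:
  fixes f :: "nat \<Rightarrow> nat"
  assumes "strict_mono_on {a..b} f" "x \<in> {a..b}"
  shows "card {y \<in> f ` {a..b}. y < f x} = x - a"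
proof -
  have "{y \<in> f ` {a..b}. y < f x} = f ` {a..<x}"
    using strict_mono_on_less[OF assms(1)] assms(2) by fastforce
  moreover have "inj_on f {a..<x}"
    using strict_mono_on_imp_inj_on[OF assms(1)] assms(2) by (auto intro: inj_on_subset)
  ultimately show ?thesis by (simp add: card_image)
qed

lemma strict_mono_on_eq_if_image_eq:
  fixes g h :: "nat \<Rightarrow> nat"
  assumes g: "strict_mono_on {a..b} g" and h: "strict_mono_on {a..b} h"
    and im: "g ` {a..b} = h ` {a..b}" and x: "x \<in> {a..b}"
  shows "g x = h x"
proof -
  let ?below = "\<lambda>z. {y \<in> g ` {a..b}. y < z}"
  have eq: "card (?below (g x)) = card (?below (h x))"
    using card_less_in_image_strict_mono_on[OF g x] card_less_in_image_strict_mono_on[OF h x]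
    by (simp add: im)
  have mem: "g x \<in> g ` {a..b}" "h x \<in> g ` {a..b}" using x im by auto
  have less: "card (?below u) < card (?below v)" if "u \<in> g ` {a..b}" "u < v" for u v
    by (rule psubset_card_mono) (use that in auto)
  show ?thesis
  proof (rule linorder_cases[of "g x" "h x"])
    assume "g x < h x"
    then show ?thesis using less[OF mem(1)] eq by (metis less_irrefl)
  next
    assume "h x < g x"
    then show ?thesis using less[OF mem(2)] eq by (metis less_irrefl)
  qed
qed

lemma strict_mono_on_sorted_list_nth:
  "strict_mono_on {Suc c..c + card X} (\<lambda>x. sorted_list_of_set X ! (x - c - 1))"
proof (rule strict_mono_onI)
  fix x y assume "x \<in> {Suc c..c + card X}" "y \<in> {Suc c..c + card X}" "x < y"
  then have "x - c - 1 < y - c - 1" "y - c - 1 < length (sorted_list_of_set X)"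
    by auto
  then show "sorted_list_of_set X ! (x - c - 1) < sorted_list_of_set X ! (y - c - 1)"
    using sorted_wrt_nth_less[OF strict_sorted_list_of_set] by blast
qed

lemma image_sorted_list_nth:
  assumes "finite X"
  shows "(\<lambda>x. sorted_list_of_set X ! (x - c - 1)) ` {Suc c..c + card X} = X"
proof
  let ?L = "sorted_list_of_set X"
  show "(\<lambda>x. ?L ! (x - c - 1)) ` {Suc c..c + card X} \<subseteq> X"
  proof
    fix y assume "y \<in> (\<lambda>x. ?L ! (x - c - 1)) ` {Suc c..c + card X}"
    then obtain x where "x \<in> {Suc c..c + card X}" "y = ?L ! (x - c - 1)" by auto
    then have "y \<in> set ?L" by auto
    then show "y \<in> X" using assms by simp
  qed
  show "X \<subseteq> (\<lambda>x. ?L ! (x - c - 1)) ` {Suc c..c + card X}"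
  proof
    fix y assume "y \<in> X"
    then have "y \<in> set ?L" using assms by simp
    then obtain t where "t < length ?L" "?L ! t = y" by (auto simp: in_set_conv_nth)
    then show "y \<in> (\<lambda>x. ?L ! (x - c - 1)) ` {Suc c..c + card X}"
      by (intro image_eqI[of _ _ "t + c + 1"]) auto
  qed
qed

lemma strict_mono_on_cong:
  "strict_mono_on X g \<Longrightarrow> (\<And>x. x \<in> X \<Longrightarrow> f x = g x) \<Longrightarrow> strict_mono_on X f"
  by (auto simp: strict_mono_on_def)

lemma card_le_if_subset_atLeastAtMost: "A \<subseteq> {1..n} \<Longrightarrow> card A \<le> n"
  using card_mono[of "{1..n}" A] by simp

context
  fixes n :: nat and A :: "nat set"
  assumes A_subset: "A \<subseteq> {1..n}"
begin

private lemma finite_A: "finite A"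
  using A_subset finite_subset by blast

private lemma lower_block: "{1..n - card A} = {Suc 0..0 + card ({1..n} - A)}"
  using A_subset finite_A by (simp add: card_Diff_subset)

private lemma upper_block: "{Suc (n - card A)..n} = {Suc (n - card A)..(n - card A) + card A}"
  using card_le_if_subset_atLeastAtMost[OF A_subset] by simp

lemma sigma_lower: "x \<in> {1..n - card A} \<Longrightarrow> sigma n A x = sorted_list_of_set ({1..n} - A) ! (x - 0 - 1)"
  by (simp add: sigma_def)

lemma sigma_upper:
  "x \<in> {Suc (n - card A)..n} \<Longrightarrow> sigma n A x = sorted_list_of_set A ! (x - (n - card A) - 1)"
  by (simp add: sigma_def)

lemma sigma_outside: "x \<notin> {1..n} \<Longrightarrow> sigma n A x = x"
  by (auto simp: sigma_def)

lemma strict_mono_on_sigma_lower: "strict_mono_on {1..n - card A} (sigma n A)"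
  using strict_mono_on_sorted_list_nth[of 0 "{1..n} - A"] unfolding lower_block[symmetric]
  by (rule strict_mono_on_cong) (simp add: sigma_lower)

lemma strict_mono_on_sigma_upper: "strict_mono_on {Suc (n - card A)..n} (sigma n A)"
  using strict_mono_on_sorted_list_nth[of "n - card A" A] unfolding upper_block[symmetric]
  by (rule strict_mono_on_cong) (simp add: sigma_upper)

lemma sigma_image_lower: "sigma n A ` {1..n - card A} = {1..n} - A"
proof -
  have "sigma n A ` {1..n - card A} =
      (\<lambda>x. sorted_list_of_set ({1..n} - A) ! (x - 0 - 1)) ` {1..n - card A}"
    by (rule image_cong) (simp_all add: sigma_lower)
  also have "\<dots> = {1..n} - A"
    unfolding lower_block by (rule image_sorted_list_nth) simp
  finally show ?thesis .
qed

lemma sigma_image_upper: "sigma n A ` {Suc (n - card A)..n} = A"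
proof -
  have "sigma n A ` {Suc (n - card A)..n} =
      (\<lambda>x. sorted_list_of_set A ! (x - (n - card A) - 1)) ` {Suc (n - card A)..n}"
    by (rule image_cong) (simp_all add: sigma_upper)
  also have "\<dots> = A"
    unfolding upper_block by (rule image_sorted_list_nth[OF finite_A])
  finally show ?thesis .
qed

private lemma blocks: "{1..n} = {1..n - card A} \<union> {Suc (n - card A)..n}"
  using card_le_if_subset_atLeastAtMost[OF A_subset] by auto

lemma sigma_permutes: "sigma n A permutes {1..n}"
proof (rule bij_imp_permutes)
  have im: "sigma n A ` {1..n} = {1..n}"
    using sigma_image_lower sigma_image_upper A_subset by (subst blocks) (auto simp: image_Un)
  have "inj_on (sigma n A) {1..n}"
    by (rule eq_card_imp_inj_on) (simp, simp only: im)
  then show "bij_betw (sigma n A) {1..n} {1..n}"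
    using im by (simp add: bij_betw_def)
  show "x \<notin> {1..n} \<Longrightarrow> sigma n A x = x" for x
    by (rule sigma_outside)
qed

lemma sigma_unique:
  assumes w: "w permutes {1..n}" and mono_lower: "strict_mono_on {1..n - card A} w"
    and mono_upper: "strict_mono_on {Suc (n - card A)..n} w"
    and image_upper: "w ` {Suc (n - card A)..n} = A"
  shows "w = sigma n A"
proof
  fix x
  have "{1..n - card A} = {1..n} - {Suc (n - card A)..n}" by auto
  then have image_lower: "w ` {1..n - card A} = {1..n} - A"
    using permutes_inj[OF w] permutes_image[OF w] image_upper by (simp add: image_set_diff)
  consider "x \<in> {1..n - card A}" | "x \<in> {Suc (n - card A)..n}" | "x \<notin> {1..n}"
    using blocks by blast
  then show "w x = sigma n A x"
  proof cases
    case 1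
    then show ?thesis
      by (rule strict_mono_on_eq_if_image_eq[OF mono_lower strict_mono_on_sigma_lower, rotated])
        (simp only: image_lower sigma_image_lower)
  next
    case 2
    then show ?thesis
      by (rule strict_mono_on_eq_if_image_eq[OF mono_upper strict_mono_on_sigma_upper, rotated])
        (simp only: image_upper sigma_image_upper)
  next
    case 3
    then show ?thesis using permutes_not_in[OF w] sigma_outside by simp
  qed
qed

lemma sigma_mem_iff: "x \<in> {1..n} \<Longrightarrow> sigma n A x \<in> A \<longleftrightarrow> x \<in> {Suc (n - card A)..n}"
  using sigma_image_lower sigma_image_upper blocks by blast

lemma sigma_preimage_less_iff:
  assumes p: "p \<in> {1..n}" "sigma n A p = i" and q: "q \<in> {1..n}" "sigma n A q = Suc i"
  shows "q < p \<longleftrightarrow> i \<in> A \<and> Suc i \<notin> A"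
proof -
  have p_upper: "p \<in> {Suc (n - card A)..n} \<longleftrightarrow> i \<in> A"
    and q_upper: "q \<in> {Suc (n - card A)..n} \<longleftrightarrow> Suc i \<in> A"
    using sigma_mem_iff[OF p(1)] sigma_mem_iff[OF q(1)] p(2) q(2) by auto
  have below: "p < q" if "p \<in> X" "q \<in> X" "strict_mono_on X (sigma n A)" for X
    using strict_mono_on_less[OF that(3) that(1,2)] p(2) q(2) by simp
  have p_lower: "p \<in> {1..n - card A}" if "i \<notin> A" using p_upper p(1) that by auto
  have q_lower: "q \<in> {1..n - card A}" if "Suc i \<notin> A" using q_upper q(1) that by auto
  show ?thesis
  proof (cases "i \<in> A"; cases "Suc i \<in> A")
    assume "i \<in> A" "Suc i \<in> A"
    then show ?thesis using below[OF _ _ strict_mono_on_sigma_upper] p_upper q_upper by auto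
  next
    assume "i \<in> A" "Suc i \<notin> A"
    then show ?thesis using p_upper q_lower by auto
  next
    assume "i \<notin> A" "Suc i \<in> A"
    then show ?thesis using p_lower q_upper by auto
  next
    assume "i \<notin> A" "Suc i \<notin> A"
    then show ?thesis using below[OF _ _ strict_mono_on_sigma_lower] p_lower q_lower by auto
  qed
qed

end

lemma tau_subset: "tau n k \<subseteq> {1..n}"
  by (auto simp: tau_def)

lemma card_tau: "k \<le> n \<Longrightarrow> card (tau n k) = k"
  by (simp add: tau_def)

lemma sigma_tau: assumes "k \<le> n" shows "sigma n (tau n k) = id"
proof -
  have "Suc (n - card (tau n k)) = n - k + 1" using assms by (simp add: card_tau)
  then show ?thesis
    by (intro sigma_unique[OF tau_subset, symmetric]) (auto simp: tau_def strict_mono_on_id)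
qed

lemma eq_tau_if_sigma_eq_id:
  assumes "A \<subseteq> {1..n}" "sigma n A = id"
  shows "A = tau n (card A)"
  using sigma_image_upper[OF assms(1)] card_le_if_subset_atLeastAtMost[OF assms(1)] assms(2)
  by (auto simp: tau_def)

text \<open>For a descent \<open>i \<in> A\<close>, \<open>i+1 \<notin> A\<close>, this corresponds to \<open>\<sigma>\<^sub>A \<mapsto> s\<^sub>i \<sigma>\<^sub>A\<close>.\<close>
definition move_up :: "nat set \<Rightarrow> nat \<Rightarrow> nat set" where
  "move_up A i = insert (Suc i) (A - {i})"

lemma mem_move_up: "x \<in> move_up A j \<longleftrightarrow> x = Suc j \<or> (x \<in> A \<and> x \<noteq> j)"
  by (auto simp: move_up_def)

lemma move_up_subset: "A \<subseteq> {1..n} \<Longrightarrow> 1 \<le> i \<Longrightarrow> i < n \<Longrightarrow> move_up A i \<subseteq> {1..n}"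
  by (auto simp: move_up_def)

lemma card_move_up:
  assumes "A \<subseteq> {1..n}" "i \<in> A" "Suc i \<notin> A"
  shows "card (move_up A i) = card A"
proof -
  have "finite A" using assms(1) finite_subset by blast
  moreover have "card A > 0" using \<open>finite A\<close> assms(2) by (auto simp: card_gt_0_iff)
  ultimately show ?thesis using assms(2,3) by (simp add: move_up_def card.insert_remove)
qed

lemma s_image_eq_move_up: "i \<in> A \<Longrightarrow> Suc i \<notin> A \<Longrightarrow> s i ` A = move_up A i"
  by (force simp: move_up_def s_apply image_iff)

lemma s_comp_sigma:
  assumes A: "A \<subseteq> {1..n}" and i: "1 \<le> i" "i < n" and d: "i \<in> A" "Suc i \<notin> A"
  shows "s i \<circ> sigma n A = sigma n (move_up A i)"
proof (rule sigma_unique[OF move_up_subset[OF A i]], unfold card_move_up[OF A d])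
  show "s i \<circ> sigma n A permutes {1..n}"
    by (rule permutes_compose[OF sigma_permutes[OF A] s_permutes[OF i]])
  show "strict_mono_on {1..n - card A} (s i \<circ> sigma n A)"
  proof (rule strict_mono_onI)
    fix x y assume xy: "x \<in> {1..n - card A}" "y \<in> {1..n - card A}" "x < y"
    have "sigma n A x \<noteq> i"
      using imageI[OF xy(1), of "sigma n A"] sigma_image_lower[OF A] d(1) by auto
    then show "(s i \<circ> sigma n A) x < (s i \<circ> sigma n A) y"
      using strict_mono_onD[OF strict_mono_on_sigma_lower[OF A] xy] by (simp add: s_strict_mono)
  qed
  show "strict_mono_on {Suc (n - card A)..n} (s i \<circ> sigma n A)"
  proof (rule strict_mono_onI)
    fix x y assume xy: "x \<in> {Suc (n - card A)..n}" "y \<in> {Suc (n - card A)..n}" "x < y"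
    have "sigma n A y \<noteq> Suc i"
      using imageI[OF xy(2), of "sigma n A"] sigma_image_upper[OF A] d(2) by auto
    then show "(s i \<circ> sigma n A) x < (s i \<circ> sigma n A) y"
      using strict_mono_onD[OF strict_mono_on_sigma_upper[OF A] xy] by (simp add: s_strict_mono)
  qed
  have "(s i \<circ> sigma n A) ` {Suc (n - card A)..n} = s i ` (sigma n A ` {Suc (n - card A)..n})"
    by (rule image_comp[symmetric])
  then show "(s i \<circ> sigma n A) ` {Suc (n - card A)..n} = move_up A i"
    by (simp only: sigma_image_upper[OF A] s_image_eq_move_up[OF d])
qed

lemma sigma_obtain_preimages:
  assumes "A \<subseteq> {1..n}" "1 \<le> i" "i < n"
  obtains p q where "p \<in> {1..n}" "sigma n A p = i" "q \<in> {1..n}" "sigma n A q = Suc i"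
proof -
  have "i \<in> {1..n}" "Suc i \<in> {1..n}" using assms(2,3) by auto
  then show ?thesis
    using permutes_obtain_preimage[OF sigma_permutes[OF assms(1)]] that by metis
qed

lemma inv_count_sigma_move_up:
  assumes A: "A \<subseteq> {1..n}" and i: "1 \<le> i" "i < n" and d: "i \<in> A" "Suc i \<notin> A"
  shows "inv_count n (sigma n A) = Suc (inv_count n (sigma n (move_up A i)))"
proof -
  obtain p q where pq: "p \<in> {1..n}" "sigma n A p = i" "q \<in> {1..n}" "sigma n A q = Suc i"
    using sigma_obtain_preimages[OF A i] .
  then have "q < p" using sigma_preimage_less_iff[OF A] d by blast
  then show ?thesis
    using inv_count_s_comp_greater[OF permutes_inj[OF sigma_permutes[OF A]] pq]
    by (simp add: s_comp_sigma[OF A i d])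
qed

lemma inv_count_s_comp_sigma:
  assumes A: "A \<subseteq> {1..n}" and i: "1 \<le> i" "i < n" and nd: "\<not> (i \<in> A \<and> Suc i \<notin> A)"
  shows "inv_count n (s i \<circ> sigma n A) = Suc (inv_count n (sigma n A))"
proof -
  obtain p q where pq: "p \<in> {1..n}" "sigma n A p = i" "q \<in> {1..n}" "sigma n A q = Suc i"
    using sigma_obtain_preimages[OF A i] .
  then have "p < q" using sigma_preimage_less_iff[OF A] nd by (metis linorder_neqE_nat n_not_Suc_n)
  then show ?thesis
    using inv_count_s_comp_less[OF permutes_inj[OF sigma_permutes[OF A]] pq] by simp
qed

lemma descent_exists:
  assumes A: "A \<subseteq> {1..n}" and "A \<noteq> tau n (card A)"
  shows "\<exists>j. 1 \<le> j \<and> j < n \<and> j \<in> A \<and> Suc j \<notin> A"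
proof (rule ccontr)
  assume no_descent: "\<not> ?thesis"
  have "A \<noteq> {}" using assms(2) by (auto simp: tau_def)
  moreover have "finite A" using A finite_subset by blast
  ultimately have "Min A \<in> A" by simp
  then have m: "Min A \<in> A" "1 \<le> Min A" "Min A \<le> n" using A by auto
  have up: "Min A + t \<le> n \<Longrightarrow> Min A + t \<in> A" for t
    by (induction t) (use m no_descent in auto)
  have "A = {Min A..n}"
  proof
    show "A \<subseteq> {Min A..n}"
      using A Min_le[OF \<open>finite A\<close>] m by fastforce
    show "{Min A..n} \<subseteq> A" using up by (metis atLeastAtMost_iff le_add_diff_inverse subsetI)
  qed
  moreover have "n - card {Min A..n} + 1 = Min A" using m(2,3) by simp
  ultimately have "A = tau n (card A)" by (simp add: tau_def)
  then show False using assms(2) by simp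
qed

lemma reduced_word_ConsD:
  assumes A: "A \<subseteq> {1..n}" and rw: "reduced_word n (sigma n A) (i # r)"
  shows "1 \<le> i \<and> i < n \<and> i \<in> A \<and> Suc i \<notin> A \<and> reduced_word n (sigma n (move_up A i)) r"
proof -
  have i: "1 \<le> i" "i < n" and r: "\<forall>j\<in>set r. 1 \<le> j \<and> j < n"
    and sigma_eq: "sigma n A = s i \<circ> word_perm r"
    and len: "Suc (length r) = inv_count n (sigma n A)"
    using rw unfolding reduced_word_def by auto
  have W: "word_perm r = s i \<circ> sigma n A"
    unfolding sigma_eq comp_assoc[symmetric] s_comp_s by simp
  have d: "i \<in> A \<and> Suc i \<notin> A"
  proof (rule ccontr)
    assume "\<not> (i \<in> A \<and> Suc i \<notin> A)"
    then have "inv_count n (word_perm r) = Suc (inv_count n (sigma n A))"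
      using inv_count_s_comp_sigma[OF A i] W by simp
    then show False using word_perm_permutes_inv_count_le[OF r] len by simp
  qed
  have "word_perm r = sigma n (move_up A i)"
    using W s_comp_sigma[OF A i] d by simp
  moreover have "inv_count n (sigma n (move_up A i)) = length r"
    using inv_count_sigma_move_up[OF A i] d len by simp
  ultimately show ?thesis using i d r unfolding reduced_word_def by simp
qed

lemma reduced_word_Cons:
  assumes A: "A \<subseteq> {1..n}" and i: "1 \<le> i" "i < n" and d: "i \<in> A" "Suc i \<notin> A"
    and rw: "reduced_word n (sigma n (move_up A i)) u"
  shows "reduced_word n (sigma n A) (i # u)"
proof -
  have "sigma n A = s i \<circ> sigma n (move_up A i)"
    unfolding s_comp_sigma[OF A i d, symmetric] comp_assoc[symmetric] s_comp_s by simp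
  moreover have "inv_count n (sigma n A) = Suc (inv_count n (sigma n (move_up A i)))"
    using inv_count_sigma_move_up[OF A i d] .
  ultimately show ?thesis
    using rw i unfolding reduced_word_def by simp
qed

lemma reduced_word_Nil_imp_eq_tau:
  "A \<subseteq> {1..n} \<Longrightarrow> reduced_word n (sigma n A) [] \<Longrightarrow> A = tau n (card A)"
  unfolding reduced_word_def by (rule eq_tau_if_sigma_eq_id) auto

lemma reduced_word_id: "reduced_word n id is \<longleftrightarrow> is = []"
  unfolding reduced_word_def using inv_count_id[of n] by (cases "is") simp_all

lemma reduced_word_sigma_exists: "A \<subseteq> {1..n} \<Longrightarrow> \<exists>is. reduced_word n (sigma n A) is"
proof (induction "inv_count n (sigma n A)" arbitrary: A rule: less_induct)
  case less
  show ?case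
  proof (cases "A = tau n (card A)")
    case True
    have "sigma n (tau n (card A)) = id"
      using sigma_tau[OF card_le_if_subset_atLeastAtMost[OF less.prems]] .
    then have "reduced_word n (sigma n A) []"
      using True reduced_word_id by metis
    then show ?thesis ..
  next
    case False
    then obtain j where j: "1 \<le> j" "j < n" "j \<in> A" "Suc j \<notin> A"
      using descent_exists[OF less.prems] by blast
    then have "inv_count n (sigma n (move_up A j)) < inv_count n (sigma n A)"
      using inv_count_sigma_move_up[OF less.prems] by simp
    then obtain u where "reduced_word n (sigma n (move_up A j)) u"
      using less.hyps[OF _ move_up_subset[OF less.prems j(1,2)]] by blast
    then show ?thesis using reduced_word_Cons[OF less.prems j] by blast
  qed
qed

text \<open>Two reduced words of \<open>\<sigma>\<^sub>A\<close> start with descents \<open>i\<close>, \<open>j\<close> of \<open>A\<close>; if they differ,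
  they are not adjacent, and both words can be rerouted through a common reduced word
  of \<open>\<sigma>\<close> for the set with both descents moved, on which \<open>\<partial>\<^sub>i\<close> and \<open>\<partial>\<^sub>j\<close> commute.\<close>
lemma foldr_dd_reduced_word_eq:
  "A \<subseteq> {1..n} \<Longrightarrow> reduced_word n (sigma n A) r1 \<Longrightarrow> reduced_word n (sigma n A) r2 \<Longrightarrow>
   foldr dd r1 F = foldr dd r2 F"
proof (induction "length r1" arbitrary: A r1 r2 rule: less_induct)
  case less
  have len_eq: "length r1 = length r2" using less.prems unfolding reduced_word_def by simp
  show ?case
  proof (cases r1)
    case Nil
    then show ?thesis using len_eq by simp
  next
    case (Cons i u1)
    then obtain j u2 where r2: "r2 = j # u2" using len_eq by (cases r2) auto
    have I: "1 \<le> i" "i < n" "i \<in> A" "Suc i \<notin> A" "reduced_word n (sigma n (move_up A i)) u1"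
      using reduced_word_ConsD[OF less.prems(1)] less.prems(2) Cons by auto
    have J: "1 \<le> j" "j < n" "j \<in> A" "Suc j \<notin> A" "reduced_word n (sigma n (move_up A j)) u2"
      using reduced_word_ConsD[OF less.prems(1)] less.prems(3) r2 by auto
    have Ai: "move_up A i \<subseteq> {1..n}" and Aj: "move_up A j \<subseteq> {1..n}"
      using move_up_subset less.prems(1) I(1,2) J(1,2) by auto
    have shorter: "length u1 < length r1" "length u2 < length r1"
      using Cons r2 len_eq by auto
    show ?thesis
    proof (cases "i = j")
      case True
      then show ?thesis using less.hyps[OF shorter(1) Ai I(5)] J(5) Cons r2 by simp
    next
      case False
      let ?B = "move_up (move_up A i) j"
      have not_adjacent: "j \<noteq> Suc i" "i \<noteq> Suc j" using I(3,4) J(3,4) by blast+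
      then have far: "Suc j < i \<or> Suc i < j" using False by linarith
      have B: "?B = move_up (move_up A j) i"
        using False not_adjacent by (auto simp: move_up_def)
      obtain u where u: "reduced_word n (sigma n ?B) u"
        using reduced_word_sigma_exists move_up_subset[OF Ai J(1,2)] by blast
      have "reduced_word n (sigma n (move_up A i)) (j # u)"
        using reduced_word_Cons[OF Ai J(1,2) _ _ u] False J(3,4) by (auto simp: mem_move_up)
      then have "foldr dd u1 F = dd j (foldr dd u F)"
        using less.hyps[OF shorter(1) Ai I(5)] by auto
      moreover have "reduced_word n (sigma n (move_up A j)) (i # u)"
        using reduced_word_Cons[OF Aj I(1,2) _ _ u[unfolded B]] False I(3,4)
        by (auto simp: mem_move_up)
      then have "foldr dd u2 F = dd i (foldr dd u F)"
        using less.hyps[OF shorter(2) Aj J(5)] by auto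
      ultimately show ?thesis
        using Cons r2 dd_commute[OF far] by simp
    qed
  qed
qed

lemma dd_perm_sigma_move_up:
  assumes A: "A \<subseteq> {1..n}" and i: "1 \<le> i" "i < n" and d: "i \<in> A" "Suc i \<notin> A"
  shows "dd_perm n (sigma n A) F = dd i (dd_perm n (sigma n (move_up A i)) F)"
proof -
  let ?r = "SOME is. reduced_word n (sigma n (move_up A i)) is"
  have "reduced_word n (sigma n (move_up A i)) ?r"
    using reduced_word_sigma_exists[OF move_up_subset[OF A i]] by (rule someI_ex)
  then have r: "reduced_word n (sigma n A) (i # ?r)"
    by (rule reduced_word_Cons[OF A i d])
  then have "reduced_word n (sigma n A) (SOME is. reduced_word n (sigma n A) is)"
    by (rule someI)
  then show ?thesis
    unfolding dd_perm_def using foldr_dd_reduced_word_eq[OF A _ r] by simp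
qed

lemma dd_perm_sigma_tau: "k \<le> n \<Longrightarrow> dd_perm n (sigma n (tau n k)) F = F"
  by (simp add: dd_perm_def sigma_tau reduced_word_id)

lemma dd_perm_sigma_eq_foldr:
  assumes "A \<subseteq> {1..n}" "reduced_word n (sigma n A) r"
  shows "dd_perm n (sigma n A) F = foldr dd r F"
  unfolding dd_perm_def
  using assms foldr_dd_reduced_word_eq someI[of "reduced_word n (sigma n A)"] by blast

lemma move_up_descent:
  assumes B: "B \<subseteq> {1..n}" and j: "1 \<le> j" "j < n" and d: "j \<in> B" "Suc j \<notin> B"
  shows "move_up B j \<subseteq> {1..n}" "card (move_up B j) = card B"
    "inv_count n (sigma n (move_up B j)) < inv_count n (sigma n B)"
    "dd_perm n (sigma n B) F = dd j (dd_perm n (sigma n (move_up B j)) F)"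
  using move_up_subset[OF B j] card_move_up[OF B d] inv_count_sigma_move_up[OF B j d]
    dd_perm_sigma_move_up[OF B j d] by simp_all

section \<open>Symmetry of \<open>\<partial>\<^sub>\<sigma>\<^sub>A F\<close>\<close>

lemma strict_mono_on_atLeastAtMost_SucI:
  fixes f :: "nat \<Rightarrow> nat"
  assumes step: "\<And>i. 1 \<le> i \<Longrightarrow> i < n \<Longrightarrow> f i < f (Suc i)"
  shows "strict_mono_on {1..n} f"
proof (rule strict_mono_onI)
  have chain: "f x < f (x + Suc d)" if "1 \<le> x" "x + Suc d \<le> n" for x d
    using that(2)
  proof (induction d)
    case 0
    then show ?case using step[of x] that(1) by simp
  next
    case (Suc d)
    then show ?case using step[of "x + Suc d"] that(1) by simp
  qed
  fix x y :: nat assume xy: "x \<in> {1..n}" "y \<in> {1..n}" "x < y"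
  obtain d where "y = Suc (x + d)" using less_imp_Suc_add[OF \<open>x < y\<close>] ..
  then show "f x < f y" using chain[of x d] xy by simp
qed

lemma permutes_strict_mono_on_eq_id:
  fixes v :: "nat \<Rightarrow> nat"
  assumes "v permutes {1..n}" "strict_mono_on {1..n} v"
  shows "v = id"
proof
  fix x
  show "v x = id x"
  proof (cases "x \<in> {1..n}")
    case True
    then show ?thesis
      using strict_mono_on_eq_if_image_eq[OF assms(2) strict_mono_on_id] permutes_image[OF assms(1)]
      by simp
  next
    case False
    then show ?thesis using permutes_not_in[OF assms(1)] by simp
  qed
qed

lemma permutes_neq_id_descent:
  assumes w: "w permutes {1..n}" and "w \<noteq> id"
  shows "\<exists>i p q. 1 \<le> i \<and> i < n \<and> p \<in> {1..n} \<and> q \<in> {1..n} \<and> w p = i \<and> w q = Suc i \<and> q < p"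
proof (rule ccontr)
  assume no_descent: "\<not> ?thesis"
  have v: "inv w permutes {1..n}" using permutes_inv[OF w] .
  have "inv w i < inv w (Suc i)" if "1 \<le> i" "i < n" for i
  proof -
    have "inv w i \<in> {1..n}" "inv w (Suc i) \<in> {1..n}" "w (inv w i) = i" "w (inv w (Suc i)) = Suc i"
      using permutes_in_image[OF v] that permutes_inverses[OF w] by auto
    moreover from this have "inv w i \<noteq> inv w (Suc i)" by (metis n_not_Suc_n)
    ultimately show ?thesis using no_descent that by (metis linorder_neqE_nat)
  qed
  then have "inv w = id"
    by (intro permutes_strict_mono_on_eq_id[OF v] strict_mono_on_atLeastAtMost_SucI)
  then have "w = id"
    by (metis inv_id inv_inv_eq permutes_bij[OF w])
  then show False using assms(2) by simp
qed

lemma descent_neq_boundary: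
  assumes "inj w" "w ` {1..m} = {1..m}" "1 \<le> i" "w p = i" "w q = Suc i" "1 \<le> q" "q < p"
  shows "i \<noteq> m"
proof
  assume i: "i = m"
  then have "i \<in> w ` {1..m}" using assms(2,3) by simp
  then obtain p' where "p' \<in> {1..m}" "w p' = w p" using assms(4) by auto
  then have "p \<le> m" using injD[OF assms(1)] by fastforce
  moreover have "q \<notin> {1..m}"
  proof
    assume "q \<in> {1..m}"
    then have "w q \<in> {1..m}" using assms(2) by blast
    then show False using assms(5) i by simp
  qed
  ultimately show False using assms(6,7) by auto
qed

lemma perm_poly_eq_if_block_stabilizer:
  assumes S_fixed: "\<forall>j. 1 \<le> j \<and> j < n \<and> j \<noteq> n - k \<longrightarrow> S j F = F"
  shows "w permutes {1..n} \<Longrightarrow> w ` {1..n - k} = {1..n - k} \<Longrightarrow> perm_poly w F = F"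
proof (induction "inv_count n w" arbitrary: w rule: less_induct)
  case less
  show ?case
  proof (cases "w = id")
    case True
    then show ?thesis by (simp add: perm_poly_id)
  next
    case False
    then obtain i p q where ipq: "1 \<le> i" "i < n" "p \<in> {1..n}" "q \<in> {1..n}"
      "w p = i" "w q = Suc i" "q < p"
      using permutes_neq_id_descent[OF less.prems(1)] by blast
    have inj: "inj w" using permutes_inj[OF less.prems(1)] .
    have "i \<noteq> n - k"
      using descent_neq_boundary[OF inj less.prems(2) ipq(1,5,6) _ ipq(7)] ipq(4) by simp
    let ?w' = "s i \<circ> w"
    have "i \<in> {1..n - k} \<longleftrightarrow> Suc i \<in> {1..n - k}" using \<open>i \<noteq> n - k\<close> ipq(1) by auto
    then have "?w' ` {1..n - k} = {1..n - k}"
      using s_image_eq image_comp[of "s i" w "{1..n - k}"] less.prems(2) by metis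
    moreover have "inv_count n ?w' < inv_count n w"
      using inv_count_s_comp_greater[OF inj ipq(3,5,4,6,7)] by simp
    moreover have w': "?w' permutes {1..n}"
      by (rule permutes_compose[OF less.prems(1) s_permutes[OF ipq(1,2)]])
    ultimately have "perm_poly ?w' F = F" using less.hyps by blast
    moreover have "w = s i \<circ> ?w'"
      by (simp add: comp_assoc[symmetric])
    then have "perm_poly w F = S i (perm_poly ?w' F)"
      using perm_poly_comp[of "s i" ?w' F] permutes_bij[OF w'] by simp
    ultimately show ?thesis
      using S_fixed ipq(1,2) \<open>i \<noteq> n - k\<close> by simp
  qed
qed

lemma S_fixed_if_sym_block:
  assumes "F \<in> sym_block n k" "1 \<le> j" "j < n" "j \<noteq> n - k"
  shows "S j F = F"
proof -
  have "s j permutes {1..n}" using s_permutes assms(2,3) by blast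
  moreover have "s j ` {1..n - k} = {1..n - k}" using assms(2-4) by (intro s_image_eq) auto
  ultimately show ?thesis using assms(1) unfolding sym_block_def by blast
qed

lemma S_Suc_dd_dd_Suc: "S j h = h \<Longrightarrow> S (Suc j) (dd j (dd (Suc j) h)) = dd j (dd (Suc j) h)"
  using dd_braid[of j h] by (metis dd_eq_0_iff dd_zero)

lemma S_dd_Suc_dd: "S (Suc i) h = h \<Longrightarrow> S i (dd (Suc i) (dd i h)) = dd (Suc i) (dd i h)"
  using dd_braid[of i h] by (metis dd_eq_0_iff dd_zero)

text \<open>Peel off a descent \<open>j\<close> of \<open>C\<close>: if \<open>s\<^sub>i\<close> and \<open>\<partial>\<^sub>j\<close> are far apart they commute;
  if they are adjacent, peel off a second descent and use the braid relation.\<close>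
lemma S_dd_perm_sigma:
  assumes S_fixed: "\<forall>j. 1 \<le> j \<and> j < n \<and> j \<noteq> n - k \<longrightarrow> S j F = F"
  shows "C \<subseteq> {1..n} \<Longrightarrow> card C = k \<Longrightarrow> 1 \<le> i \<Longrightarrow> i < n \<Longrightarrow> (i \<in> C \<longleftrightarrow> Suc i \<in> C) \<Longrightarrow>
    S i (dd_perm n (sigma n C) F) = dd_perm n (sigma n C) F"
proof (induction "inv_count n (sigma n C)" arbitrary: C i rule: less_induct)
  case less
  note C = less.prems
  let ?D = "\<lambda>B. dd_perm n (sigma n B) F"
  show ?case
  proof (cases "C = tau n (card C)")
    case True
    have k: "k \<le> n" using card_le_if_subset_atLeastAtMost[OF C(1)] C(2) by simp
    have "i \<noteq> n - k" using C(2,4,5) True by (auto simp: tau_def)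
    then show ?thesis using S_fixed C(2-4) True dd_perm_sigma_tau[OF k] by metis
  next
    case False
    then obtain j where j: "1 \<le> j" "j < n" "j \<in> C" "Suc j \<notin> C"
      using descent_exists[OF C(1)] by blast
    let ?Cj = "move_up C j"
    note Cj = move_up_descent[OF C(1) j]
    have IH: "S i' (?D B) = ?D B"
      if "B \<subseteq> {1..n}" "card B = k" "1 \<le> i'" "i' < n" "i' \<in> B \<longleftrightarrow> Suc i' \<in> B"
        "inv_count n (sigma n B) \<le> inv_count n (sigma n ?Cj)" for B i'
      using less.hyps[of B i'] that Cj(3) by simp
    have "i \<noteq> j" using C(5) j(3,4) by auto
    then consider "Suc i < j \<or> Suc j < i" | "i = Suc j" | "j = Suc i" by linarith
    then show ?thesis
    proof cases
      case 1
      then have "i \<in> ?Cj \<longleftrightarrow> Suc i \<in> ?Cj" using C(5) by (auto simp: mem_move_up)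
      then have "S i (?D ?Cj) = ?D ?Cj" using IH Cj(1,2) C(2-4) by simp
      then show ?thesis using Cj(4) S_dd_commute 1 by metis
    next
      case 2
      then have "Suc j < n" "Suc j \<in> ?Cj" "Suc (Suc j) \<notin> ?Cj"
        using C(4,5) j(4) by (auto simp: mem_move_up)
      note C2 = move_up_descent[OF Cj(1) _ this]
      have "S j (?D (move_up ?Cj (Suc j))) = ?D (move_up ?Cj (Suc j))"
        using IH[OF C2(1) _ j(1,2)] C2(2,3) Cj(2) C(2) by (simp add: mem_move_up)
      then show ?thesis using Cj(4) C2(4) S_Suc_dd_dd_Suc 2 by simp
    next
      case 3
      then have "i \<in> ?Cj" "Suc i \<notin> ?Cj" using C(5) j(3) by (auto simp: mem_move_up)
      note C2 = move_up_descent[OF Cj(1) C(3,4) this]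
      have "Suc i < n" using 3 j(2) by simp
      then have "S (Suc i) (?D (move_up ?Cj i)) = ?D (move_up ?Cj i)"
        using IH[OF C2(1)] C2(2,3) Cj(2) C(2) 3 by (simp add: mem_move_up)
      then show ?thesis using Cj(4) C2(4) S_dd_Suc_dd 3 by simp
    qed
  qed
qed

lemma coeff_relations_S_fixed:
  "coeff_relations n f \<Longrightarrow> 1 \<le> i \<Longrightarrow> i < n \<Longrightarrow> C \<subseteq> {1..n} \<Longrightarrow> \<not> (i \<notin> C \<and> Suc i \<in> C) \<Longrightarrow>
    S i (f C) = f C"
  unfolding coeff_relations_def by blast

lemma coeff_relations_dd:
  "coeff_relations n f \<Longrightarrow> 1 \<le> i \<Longrightarrow> i < n \<Longrightarrow> C \<subseteq> {1..n} \<Longrightarrow> i \<notin> C \<Longrightarrow> Suc i \<in> C \<Longrightarrow>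
    f (insert i (C - {Suc i})) = dd i (f C)"
  unfolding coeff_relations_def by blast

lemma foldr_dd_reduced_word_coeff:
  assumes rel: "coeff_relations n f"
  shows "A \<subseteq> {1..n} \<Longrightarrow> reduced_word n (sigma n A) r \<Longrightarrow> foldr dd r (f (tau n (card A))) = f A"
proof (induction r arbitrary: A)
  case Nil
  then have "A = tau n (card A)" by (rule reduced_word_Nil_imp_eq_tau)
  then show ?case by simp
next
  case (Cons i r)
  have I: "1 \<le> i" "i < n" "i \<in> A" "Suc i \<notin> A" "reduced_word n (sigma n (move_up A i)) r"
    using reduced_word_ConsD[OF Cons.prems] by auto
  note A' = move_up_descent[OF Cons.prems(1) I(1-4)]
  have "foldr dd r (f (tau n (card A))) = f (move_up A i)"
    using Cons.IH[OF A'(1) I(5)] A'(2) by simp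
  moreover have "insert i (move_up A i - {Suc i}) = A"
    using I(3,4) by (auto simp: move_up_def)
  moreover have "f (insert i (move_up A i - {Suc i})) = dd i (f (move_up A i))"
    using coeff_relations_dd[OF rel I(1,2) A'(1)] by (simp add: mem_move_up)
  ultimately show ?case by simp
qed

lemma coeff_relations_imp_block_conditions:
  assumes Pn: "\<forall>A. f A \<in> Pn n" and rel: "coeff_relations n f" and k: "k \<le> n"
  shows "f (tau n k) \<in> sym_block n k \<and>
    (\<forall>A. A \<subseteq> {1..n} \<and> card A = k \<longrightarrow> f A = dd_perm n (sigma n A) (f (tau n k)))"
proof (intro conjI allI impI)
  have "\<forall>j. 1 \<le> j \<and> j < n \<and> j \<noteq> n - k \<longrightarrow> S j (f (tau n k)) = f (tau n k)"
  proof (intro allI impI)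
    fix j assume j: "1 \<le> j \<and> j < n \<and> j \<noteq> n - k"
    then have "\<not> (j \<notin> tau n k \<and> Suc j \<in> tau n k)" using k by (auto simp: tau_def)
    then show "S j (f (tau n k)) = f (tau n k)"
      using coeff_relations_S_fixed[OF rel _ _ tau_subset] j by blast
  qed
  note fixed = perm_poly_eq_if_block_stabilizer[OF this]
  show "f (tau n k) \<in> sym_block n k"
    unfolding sym_block_def using Pn fixed by blast
  fix A assume A: "A \<subseteq> {1..n} \<and> card A = k"
  obtain r where r: "reduced_word n (sigma n A) r"
    using reduced_word_sigma_exists A by blast
  have "foldr dd r (f (tau n k)) = f A"
    using foldr_dd_reduced_word_coeff[OF rel _ r] A by simp
  then show "f A = dd_perm n (sigma n A) (f (tau n k))"
    using dd_perm_sigma_eq_foldr[OF _ r] A by simp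
qed

lemma block_conditions_imp_coeff_relations:
  assumes blocks: "\<forall>k\<le>n. f (tau n k) \<in> sym_block n k \<and>
    (\<forall>A. A \<subseteq> {1..n} \<and> card A = k \<longrightarrow> f A = dd_perm n (sigma n A) (f (tau n k)))"
  shows "coeff_relations n f"
  unfolding coeff_relations_def
proof (intro allI impI conjI)
  fix i C assume "1 \<le> i \<and> i < n \<and> C \<subseteq> {1..n}"
  then have i: "1 \<le> i" "i < n" and C: "C \<subseteq> {1..n}" by auto
  define k where "k = card C"
  define F where "F = f (tau n k)"
  have k: "k \<le> n" using card_le_if_subset_atLeastAtMost[OF C] k_def by simp
  then have F: "F \<in> sym_block n k"
    and f_eq: "\<And>B. B \<subseteq> {1..n} \<Longrightarrow> card B = k \<Longrightarrow> f B = dd_perm n (sigma n B) F"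
    using blocks unfolding F_def by blast+
  have fC: "f C = dd_perm n (sigma n C) F" using f_eq[OF C] k_def by simp
  show "S i (f C) = f C" if "\<not> (i \<notin> C \<and> Suc i \<in> C)"
  proof (cases "i \<in> C \<and> Suc i \<notin> C")
    case True
    then have "f C = dd i (dd_perm n (sigma n (move_up C i)) F)"
      unfolding fC by (intro move_up_descent(4)[OF C i]) auto
    then show ?thesis by (simp only: S_dd)
  next
    case False
    then have "i \<in> C \<longleftrightarrow> Suc i \<in> C" using that by blast
    moreover have "\<forall>j. 1 \<le> j \<and> j < n \<and> j \<noteq> n - k \<longrightarrow> S j F = F"
      using S_fixed_if_sym_block[OF F] by blast
    ultimately show ?thesis
      unfolding fC by (rule S_dd_perm_sigma[OF _ C k_def[symmetric] i, rotated])
  qed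
  assume "i \<notin> C \<and> Suc i \<in> C"
  then have "move_up (insert i (C - {Suc i})) i = C" by (auto simp: move_up_def)
  moreover have X: "insert i (C - {Suc i}) \<subseteq> {1..n}" "i \<in> insert i (C - {Suc i})"
    "Suc i \<notin> insert i (C - {Suc i})" using C i by auto
  note X' = move_up_descent[OF X(1) i X(2,3), unfolded calculation]
  show "f (insert i (C - {Suc i})) = dd i (f C)"
    using f_eq[OF X(1)] X'(2,4) f_eq[OF C] k_def by simp
qed

theorem corollary3p3:
  fixes n :: nat and f :: "nat set \<Rightarrow> mpoly"
  assumes "\<forall>A. f A \<in> Pn n"
    and "\<forall>A. \<not> A \<subseteq> {1..n} \<longrightarrow> f A = 0"
  shows "in_Lambda n f \<longleftrightarrow>
     (\<forall>k \<le> n. f (tau n k) \<in> sym_block n k \<and>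
        (\<forall>A. A \<subseteq> {1..n} \<and> card A = k \<longrightarrow> f A = dd_perm n (sigma n A) (f (tau n k))))"
  using in_Lambda_iff_coeff_relations[OF assms(2)] coeff_relations_imp_block_conditions[OF assms(1)]
    block_conditions_imp_coeff_relations by blast

end
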